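(* Let $(x_k)_{k\geq0}$ be a nonnegative, monotone nonincreasing sequence of real numbers, and let $G=\{k\geq 0: x_k/x_{k+1}<2\}$. Then for all $n\geq 0$, \[ \sum_{k\leq n} x_k \leq 3x_0 + 3\sum_{\substack{k\in G\\ k\leq n}} x_{k+1}. \] *)

theory Defs
  imports Complex_Main
begin

end

theory Submission
  imports Defs
begin

text \<open>
  Outside \<open>G\<close> the sequence at least halves, so there \<open>x k \<le> 2 x k - 2 x (k+1)\<close>, and these
  terms telescope. The proof is an induction with the potential
  \<open>\<Sum>k\<le>m. x k + 2 x (m+1)\<close>: a step outside \<open>G\<close> does not increase it, and a step
  in \<open>G\<close> increases it by \<open>2 x (m+2) - x (m+1) \<le> 3 x (m+2)\<close>.
\<close>

lemma mult_le_if_not_divide_less: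
  fixes a b c :: "'a :: linordered_field"
  assumes "0 \<le> b" and "0 < c" and "\<not> a / b < c"
  shows "c * b \<le> a"
proof -
  have "b \<noteq> 0" using assms(2,3) by auto
  with assms(1) have "0 < b" by simp
  moreover have "c \<le> a / b" using assms(3) by simp
  ultimately show ?thesis by (simp add: pos_le_divide_eq mult.commute)
qed

lemma sum_atMost_halving_potential_bound:
  fixes x :: "nat \<Rightarrow> 'a :: linordered_idom"
  assumes nonneg: "\<And>k. x k \<ge> 0"
    and halving: "\<And>k. k \<notin> G \<Longrightarrow> 2 * x (Suc k) \<le> x k"
  shows "(\<Sum>k\<le>m. x k) + 2 * x (Suc m) \<le> 3 * x 0 + 3 * (\<Sum>k\<in>G \<inter> {..m}. x (Suc k))"
proof (induction m)
  case 0
  show ?case using halving[of 0] nonneg[of 0] nonneg[of 1] by (cases "0 \<in> G") simp_all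
next
  case (Suc m)
  show ?case
  proof (cases "Suc m \<in> G")
    case True
    then have "G \<inter> {..Suc m} = insert (Suc m) (G \<inter> {..m})" by auto
    then have "(\<Sum>k\<in>G \<inter> {..Suc m}. x (Suc k)) = x (Suc (Suc m)) + (\<Sum>k\<in>G \<inter> {..m}. x (Suc k))"
      by simp
    then show ?thesis using Suc.IH nonneg[of "Suc m"] nonneg[of "Suc (Suc m)"] by simp
  next
    case False
    then have "G \<inter> {..Suc m} = G \<inter> {..m}" by (auto simp: le_Suc_eq)
    then show ?thesis using Suc.IH halving[OF False] by simp
  qed
qed

theorem lemma2p4:
  fixes x :: "nat \<Rightarrow> real" and n :: nat
  assumes nonneg: "\<And>k. x k \<ge> 0"
    and noninc: "\<And>k. x (Suc k) \<le> x k"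
  defines "G \<equiv> {k. x k / x (Suc k) < 2}"
  shows "(\<Sum>k\<le>n. x k) \<le> 3 * x 0 + 3 * (\<Sum>k\<in>G \<inter> {..n}. x (Suc k))"
proof -
  have halving: "2 * x (Suc k) \<le> x k" if "k \<notin> G" for k
    using that nonneg[of "Suc k"] by (intro mult_le_if_not_divide_less) (auto simp: G_def)
  have "(\<Sum>k\<le>n. x k) + 2 * x (Suc n) \<le> 3 * x 0 + 3 * (\<Sum>k\<in>G \<inter> {..n}. x (Suc k))"
    using nonneg halving by (rule sum_atMost_halving_potential_bound)
  then show ?thesis using nonneg[of "Suc n"] by linarith
qed

end
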